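(* Let $n\ge 3$ and let $\{\mathcal{G}_k\}_{k\ge0}$ be any sequence of digraphs on $\mathcal{V}=\{1,\dots,n\}$. For every algorithm in the class $\mathcal{A}_{\rm ave}$ (i.e. every choice of parameters with $\eta_k\in(0,1]$ and $\alpha_k\in[0,1-\eta_k]$ for all $k$), every initial time $k_0\ge 0$ and every initial value $x^0\in\mathbb{R}^n$ not lying on the consensus manifold $\mathrm{C}=\{x\in\mathbb{R}^n: x_1=\dots=x_n\}$, finite-time consensus is not achieved: for every $T\ge k_0$ the states $x_1(T),\dots,x_n(T)$ are not all equal.
   Context: Network of nodes $\mathcal{V}=\{1,\dots,n\}$, discrete time $k=0,1,2,\dots$, state $x_i(k)\in\mathbb{R}$ of node $i$, $x(k)=(x_1(k),\dots,x_n(k))^T$. At each time $k$ a digraph $\mathcal{G}_k=(\mathcal{V},\mathcal{E}_k)$ is given; node $j$ is a neighbor of node $i$ at time $k$ if $(j,i)\in\mathcal{E}_k$, and every node is always a neighbor of itself; $\mathcal{N}_i(k)$ denotes the neighbor set of $i$ at time $k$. The algorithm is $$x_i(k+1)=\eta_k x_i(k)+\alpha_k\min_{j\in\mathcal{N}_i(k)}x_j(k)+(1-\eta_k-\alpha_k)\max_{j\in\mathcal{N}_i(k)}x_j(k),\quad i=1,\dots,n,$$ where $\{\eta_k\},\{\alpha_k\}$ are given real sequences (the same for all nodes) with $\eta_k\ge0,\alpha_k\ge0,\alpha_k+\eta_k\le1$. The class $\mathcal{A}_{\rm ave}$ consists of those algorithms with $\eta_k\in(0,1]$, $\alpha_k\in[0,1-\eta_k]$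 for all $k$. The iteration is started at an initial time $k_0\ge0$ with $x(k_0)=x^0$. Finite-time consensus for $x^0$ means there exist $z_*\in\mathbb{R}$ and an integer $T_*$ with $x_i(T_* )=z_*$ for all $i$. *)

theory Defs
  imports Complex_Main
begin

text \<open>Nodes are 0,...,n-1 (standing for 1,...,n). A time-varying digraph is
  E :: nat => (nat * nat) set; (j,i) in E k means j is a neighbor of i at time k.
  Every node is always its own neighbor.\<close>

definition nbrs :: "nat \<Rightarrow> (nat \<Rightarrow> (nat \<times> nat) set) \<Rightarrow> nat \<Rightarrow> nat \<Rightarrow> nat set" where
  "nbrs n E k i = insert i {j. j < n \<and> (j, i) \<in> E k}"

definition in_A_ave :: "(nat \<Rightarrow> real) \<Rightarrow> (nat \<Rightarrow> real) \<Rightarrow> bool" where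
  "in_A_ave eta alpha \<longleftrightarrow> (\<forall>k. 0 < eta k \<and> eta k \<le> 1 \<and> 0 \<le> alpha k \<and> alpha k \<le> 1 - eta k)"

definition is_traj ::
  "nat \<Rightarrow> (nat \<Rightarrow> (nat \<times> nat) set) \<Rightarrow> (nat \<Rightarrow> real) \<Rightarrow> (nat \<Rightarrow> real) \<Rightarrow> nat \<Rightarrow> (nat \<Rightarrow> real)
    \<Rightarrow> (nat \<Rightarrow> nat \<Rightarrow> real) \<Rightarrow> bool" where
  "is_traj n E eta alpha k0 x0 x \<longleftrightarrow>
     (\<forall>i<n. x k0 i = x0 i) \<and>
     (\<forall>k\<ge>k0. \<forall>i<n. x (Suc k) i =
         eta k * x k i + alpha k * Min (x k ` nbrs n E k i)
         + (1 - eta k - alpha k) * Max (x k ` nbrs n E k i))"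

end

theory Submission
  imports Defs
begin

text \<open>Disagreement is invariant under one step of any algorithm in the
  class A_ave. Let M and m be the largest and smallest current values, attained at
  nodes p and q, with m < M. Since every node is its own neighbour, the neighbourhood
  maximum of p is exactly M and the neighbourhood minimum of q is exactly m; all other
  neighbourhood extrema lie in [m, M]. The update is a convex combination
  eta*v + alpha*lo + (1 - eta - alpha)*hi, monotone in lo and hi and strictly
  increasing in the own value v because eta > 0. Hence the new value at q is at most
  the update of (m, m, M), which is strictly below the update of (M, m, M), which is
  at most the new value at p. The theorem then follows by induction on time from the
  initial disagreement.\<close>

lemma Max_image_at_global_max:
  fixes f :: "'a \<Rightarrow> 'b::linorder"
  assumes "finite N" "p \<in> N" "\<forall>l\<in>N. f l \<le> f p"
  shows "Max (f ` N) = f p"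
  using assms by (intro Max_eqI) auto

lemma Min_image_at_global_min:
  fixes f :: "'a \<Rightarrow> 'b::linorder"
  assumes "finite N" "q \<in> N" "\<forall>l\<in>N. f q \<le> f l"
  shows "Min (f ` N) = f q"
  using assms by (intro Min_eqI) auto

lemma image_extrema_bounded:
  fixes f :: "'a \<Rightarrow> 'b::linorder"
  assumes "finite N" "N \<noteq> {}" "\<forall>l\<in>N. m \<le> f l \<and> f l \<le> M"
  shows "m \<le> Min (f ` N)" and "Max (f ` N) \<le> M"
  using assms by (simp_all add: Min_ge_iff Max_le_iff)

lemma nbrs_finite: "finite (nbrs n E k i)"
  unfolding nbrs_def by auto

lemma self_in_nbrs: "i \<in> nbrs n E k i"
  unfolding nbrs_def by auto

lemma nbrs_subset: "i < n \<Longrightarrow> nbrs n E k i \<subseteq> {..<n}"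
  unfolding nbrs_def by auto

definition update_value :: "real \<Rightarrow> real \<Rightarrow> real \<Rightarrow> real \<Rightarrow> real \<Rightarrow> real" where
  "update_value e a v lo hi = e * v + a * lo + (1 - e - a) * hi"

lemma update_value_mono:
  assumes "0 \<le> a" "a \<le> 1 - e" "lo \<le> lo'" "hi \<le> hi'"
  shows "update_value e a v lo hi \<le> update_value e a v lo' hi'"
proof -
  have "a * lo \<le> a * lo'" using assms(1,3) by (rule mult_left_mono[rotated])
  moreover have "(1 - e - a) * hi \<le> (1 - e - a) * hi'"
    using assms(2,4) by (intro mult_left_mono) auto
  ultimately show ?thesis unfolding update_value_def by linarith
qed

lemma update_value_strict_own:
  assumes "0 < e" "v < v'"
  shows "update_value e a v lo hi < update_value e a v' lo hi"
  using assms unfolding update_value_def by simp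

lemma step_preserves_disagreement:
  fixes x :: "nat \<Rightarrow> real" and x' :: "nat \<Rightarrow> real"
  assumes weights: "0 < e" "0 \<le> a" "a \<le> 1 - e"
    and disagree: "\<exists>i<n. \<exists>j<n. x i \<noteq> x j"
    and step: "\<forall>i<n. x' i = update_value e a (x i)
                 (Min (x ` nbrs n E k i)) (Max (x ` nbrs n E k i))"
  shows "\<exists>i<n. \<exists>j<n. x' i \<noteq> x' j"
proof -
  define M where "M = Max (x ` {..<n})"
  define m where "m = Min (x ` {..<n})"
  from disagree have nonempty: "x ` {..<n} \<noteq> {}" by auto
  obtain p where p: "p < n" "x p = M"
    using Max_in[OF _ nonempty] unfolding M_def by auto
  obtain q where q: "q < n" "x q = m"
    using Min_in[OF _ nonempty] unfolding m_def by auto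
  have bounds: "m \<le> x l \<and> x l \<le> M" if "l < n" for l
    using that unfolding m_def M_def by auto
  have "m < M"
  proof -
    from disagree obtain i j where "i < n" "j < n" "x i \<noteq> x j" by auto
    then show ?thesis using bounds[of i] bounds[of j] by linarith
  qed
  have in_bounds: "\<forall>l\<in>nbrs n E k i. m \<le> x l \<and> x l \<le> M" if "i < n" for i
    using bounds nbrs_subset[OF that] by auto
  have max_p: "Max (x ` nbrs n E k p) = M"
    using Max_image_at_global_max[OF nbrs_finite self_in_nbrs, where f=x] in_bounds[OF p(1)] p(2)
    by auto
  have min_q: "Min (x ` nbrs n E k q) = m"
    using Min_image_at_global_min[OF nbrs_finite self_in_nbrs, where f=x] in_bounds[OF q(1)] q(2)
    by auto
  note extrema = image_extrema_bounded[OF nbrs_finite, of n E k _ m x M]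
  have min_p: "m \<le> Min (x ` nbrs n E k p)" and max_q: "Max (x ` nbrs n E k q) \<le> M"
    using extrema in_bounds p(1) q(1) self_in_nbrs by blast+
  have "x' q = update_value e a m m (Max (x ` nbrs n E k q))"
    using step q min_q by simp
  also have "\<dots> \<le> update_value e a m m M"
    using weights max_q by (intro update_value_mono) auto
  also have "\<dots> < update_value e a M m M"
    using weights(1) \<open>m < M\<close> by (rule update_value_strict_own)
  also have "\<dots> \<le> update_value e a M (Min (x ` nbrs n E k p)) M"
    using weights min_p by (intro update_value_mono) auto
  also have "\<dots> = x' p"
    using step p max_p by simp
  finally show ?thesis using p(1) q(1) by force
qed

theorem theorem1:
  fixes n :: nat and E :: "nat \<Rightarrow> (nat \<times> nat) set"
    and eta alpha :: "nat \<Rightarrow> real" and k0 :: nat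
    and x0 :: "nat \<Rightarrow> real" and x :: "nat \<Rightarrow> nat \<Rightarrow> real"
  assumes "n \<ge> 3"
    and "in_A_ave eta alpha"
    and "\<exists>i<n. \<exists>j<n. x0 i \<noteq> x0 j"
    and "is_traj n E eta alpha k0 x0 x"
  shows "\<forall>T\<ge>k0. \<not> (\<forall>i<n. \<forall>j<n. x T i = x T j)"
proof (intro allI impI)
  fix T assume "k0 \<le> T"
  then have "\<exists>i<n. \<exists>j<n. x T i \<noteq> x T j"
  proof (induction T rule: dec_induct)
    case base
    then show ?case using assms(3,4) unfolding is_traj_def by metis
  next
    case (step k)
    have weights: "0 < eta k" "0 \<le> alpha k" "alpha k \<le> 1 - eta k"
      using assms(2) unfolding in_A_ave_def by auto
    have "\<forall>i<n. x (Suc k) i = update_value (eta k) (alpha k) (x k i)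
            (Min (x k ` nbrs n E k i)) (Max (x k ` nbrs n E k i))"
      using assms(4) step.hyps unfolding is_traj_def update_value_def by auto
    then show ?case
      using step_preserves_disagreement[OF weights step.IH] by blast
  qed
  then show "\<not> (\<forall>i<n. \<forall>j<n. x T i = x T j)" by auto
qed

end
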